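(* Let $n\ge 2$ and let $\mathcal{P}^c(Q_{4n})$ be the conjugacy super power graph of the generalized quaternion group $Q_{4n}$. (i) If $n$ is even, then $-(n+1)\sqrt2$ is an eigenvalue of the Sombor matrix of $\mathcal{P}^c(Q_{4n})$ with multiplicity at least $2n-2$. (ii) If $n$ is odd, then $-(2n+1)\sqrt2$ is an eigenvalue of the Sombor matrix of $\mathcal{P}^c(Q_{4n})$ with multiplicity at least $2n-1$.
   Context: For a finite simple graph $\Gamma$ with vertices $u_1,\dots,u_N$, the Sombor matrix $S(\Gamma)$ has $(i,j)$ entry $\sqrt{\deg(u_i)^2+\deg(u_j)^2}$ if $u_i,u_j$ are adjacent and $0$ otherwise. $Q_{4n}=\langle a,b: a^{2n}=e,\ a^n=b^2,\ ba=a^{-1}b\rangle$. The power graph $\mathcal{P}(G)$ has vertex set $G$, distinct $x,y$ adjacent iff $x\in\langle y\rangle$ or $y\in\langle x\rangle$. The conjugacy super power graph $\mathcal{P}^c(G)$ has vertex set $G$, and distinct $g,h$ are adjacent iff $g,h$ are conjugate in $G$ or there exist $g'$ conjugate to $g$ and $h'$ conjugate to $h$ that are adjacent in $\mathcal{P}(G)$. *)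

theory Defs
  imports "HOL-Algebra.Group" "HOL-Algebra.Generated_Groups" "Jordan_Normal_Form.Char_Poly"
begin

text \<open>Concrete model of the generalized quaternion group
  Q_{4n} = < a, b | a^(2n) = e, a^n = b^2, b a = a^(-1) b >.
  The pair (i, j) with i < 2n, j < 2 stands for the element a^i b^j.\<close>

definition quat_mult :: "nat \<Rightarrow> nat \<times> nat \<Rightarrow> nat \<times> nat \<Rightarrow> nat \<times> nat" where
  "quat_mult n x y = (case x of (i, j) \<Rightarrow> case y of (k, l) \<Rightarrow>
     if j = 0 then ((i + k) mod (2 * n), l)
     else if l = 0 then ((i + 2 * n - k) mod (2 * n), 1)
     else ((i + 2 * n - k + n) mod (2 * n), 0))"

definition Q :: "nat \<Rightarrow> (nat \<times> nat) monoid" where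
  "Q n = \<lparr> carrier = {0..<2 * n} \<times> {0..<2}, monoid.mult = quat_mult n, one = (0, 0) \<rparr>"

definition power_adj :: "('a, 'b) monoid_scheme \<Rightarrow> 'a \<Rightarrow> 'a \<Rightarrow> bool" where
  "power_adj G x y \<longleftrightarrow> x \<in> carrier G \<and> y \<in> carrier G \<and> x \<noteq> y \<and>
     (x \<in> generate G {y} \<or> y \<in> generate G {x})"

definition conjugate :: "('a, 'b) monoid_scheme \<Rightarrow> 'a \<Rightarrow> 'a \<Rightarrow> bool" where
  "conjugate G g h \<longleftrightarrow> g \<in> carrier G \<and> h \<in> carrier G \<and>
     (\<exists>x\<in>carrier G. h = x \<otimes>\<^bsub>G\<^esub> g \<otimes>\<^bsub>G\<^esub> inv\<^bsub>G\<^esub> x)"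

definition csp_adj :: "('a, 'b) monoid_scheme \<Rightarrow> 'a \<Rightarrow> 'a \<Rightarrow> bool" where
  "csp_adj G g h \<longleftrightarrow> g \<in> carrier G \<and> h \<in> carrier G \<and> g \<noteq> h \<and>
     (conjugate G g h \<or>
      (\<exists>g' h'. conjugate G g g' \<and> conjugate G h h' \<and> power_adj G g' h'))"

definition graph_deg :: "'a set \<Rightarrow> ('a \<Rightarrow> 'a \<Rightarrow> bool) \<Rightarrow> 'a \<Rightarrow> nat" where
  "graph_deg V E v = card {w \<in> V. E v w}"

definition sombor_matrix :: "'a set \<Rightarrow> ('a \<Rightarrow> 'a \<Rightarrow> bool) \<Rightarrow> nat \<Rightarrow> (nat \<Rightarrow> 'a) \<Rightarrow> real mat" where
  "sombor_matrix V E N u = mat N N (\<lambda>(i, j).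
     if E (u i) (u j)
     then sqrt (real (graph_deg V E (u i)) ^ 2 + real (graph_deg V E (u j)) ^ 2)
     else 0)"

end

theory Submission
  imports Defs
begin

text \<open>An element \<open>a\<^sup>i b\<close> of \<open>Q\<^sub>4\<^sub>n\<close> generates the subgroup \<open>{e, a\<^sup>n, a\<^sup>i b, a\<^sup>i\<^sup>+\<^sup>n b}\<close>, and its
  conjugacy class consists of the \<open>a\<^sup>j b\<close> with \<open>j \<equiv> i (mod 2)\<close>. Consequently its neighbours in the
  conjugacy super power graph are \<open>e\<close>, \<open>a\<^sup>n\<close> and the \<open>a\<^sup>j b\<close> with \<open>j \<equiv> i (mod 2)\<close> (all \<open>a\<^sup>j b\<close> if \<open>n\<close>
  is odd). So the elements \<open>a\<^sup>j b\<close> form cliques of closed twins: two cliques of size \<open>n\<close> and degree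
  \<open>n + 1\<close> for even \<open>n\<close>, one clique of size \<open>2n\<close> and degree \<open>2n + 1\<close> for odd \<open>n\<close>. If \<open>u\<^sub>i, u\<^sub>j\<close> are
  closed twins of common degree \<open>d\<close>, then row \<open>i\<close> of \<open>x I - S\<close> is row \<open>j\<close> plus
  \<open>(x + d \<surd>2)(e\<^sub>i - e\<^sub>j)\<close>; pairing every clique member with a fixed representative and pulling
  these factors out of the determinant gives \<open>(x + d \<surd>2)\<^bsup>|C| - 1\<^esup>\<close> per clique \<open>C\<close>.\<close>

lemma pow_dvd_det_of_paired_rows:
  fixes M :: "'a::comm_ring_1 mat"
  assumes M: "M \<in> carrier_mat N N" and R: "R \<subseteq> {..<N}"
    and p: "\<And>i. i \<in> R \<Longrightarrow> p i < i \<and> p i \<notin> R"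
    and rows: "\<And>i j. i \<in> R \<Longrightarrow> j < N \<Longrightarrow>
      M $$ (i, j) = M $$ (p i, j) + c * ((if j = i then 1 else 0) - (if j = p i then 1 else 0))"
  shows "c ^ card R dvd det M"
proof -
  \<comment> \<open>Replacing each row \<open>i \<in> R\<close> by \<open>e\<^sub>i - e\<^bsub>p i\<^esub>\<close> gives \<open>M'\<close> with \<open>M = E * M'\<close>, where \<open>E\<close> is
    lower triangular (as \<open>p i < i\<close>) with diagonal entry \<open>c\<close> on \<open>R\<close> and \<open>1\<close> elsewhere.\<close>
  define E :: "'a mat" where "E = mat N N (\<lambda>(i, k).
    if i \<in> R then c * (if k = i then 1 else 0) + (if k = p i then 1 else 0) else (if k = i then 1 else 0))"
  define M' :: "'a mat" where "M' = mat N N (\<lambda>(i, j).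
    if i \<in> R then (if j = i then 1 else 0) - (if j = p i then 1 else 0) else M $$ (i, j))"
  have E: "E \<in> carrier_mat N N" and M': "M' \<in> carrier_mat N N"
    unfolding E_def M'_def by auto
  have "M = E * M'"
  proof (rule eq_matI)
    fix i j assume "i < dim_row (E * M')" and "j < dim_col (E * M')"
    hence i: "i < N" and j: "j < N" using E M' by auto
    have "(E * M') $$ (i, j) = (\<Sum>k\<in>{0..<N}. E $$ (i, k) * M' $$ (k, j))"
      using i j E M' by (auto simp: scalar_prod_def)
    also have "\<dots> = M $$ (i, j)"
    proof (cases "i \<in> R")
      case True
      have pi: "p i < N" using p[OF True] i by auto
      have "(\<Sum>k\<in>{0..<N}. E $$ (i, k) * M' $$ (k, j)) =
          (\<Sum>k\<in>{0..<N}. c * (if k = i then M' $$ (k, j) else 0) + (if k = p i then M' $$ (k, j) else 0))"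
        by (rule sum.cong) (auto simp: E_def i True distrib_right)
      also have "\<dots> = c * M' $$ (i, j) + M' $$ (p i, j)"
        by (simp add: sum.distrib sum_distrib_left[symmetric] i pi)
      also have "\<dots> = M $$ (i, j)"
        using p[OF True] pi i j True by (simp add: M'_def rows[OF True j] algebra_simps)
      finally show ?thesis .
    next
      case False
      have "(\<Sum>k\<in>{0..<N}. E $$ (i, k) * M' $$ (k, j)) = (\<Sum>k\<in>{0..<N}. if k = i then M' $$ (k, j) else 0)"
        by (rule sum.cong) (auto simp: E_def i False)
      also have "\<dots> = M $$ (i, j)" using i j False by (simp add: M'_def)
      finally show ?thesis .
    qed
    finally show "M $$ (i, j) = (E * M') $$ (i, j)" by simp
  qed (use M E M' in auto)
  moreover have "det E = c ^ card R"
  proof -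
    have "det E = (\<Prod>i\<in>{0..<N}. E $$ (i, i))"
      by (subst det_lower_triangular[OF _ E]) (auto simp: E_def prod_list_diag_prod dest: p)
    also have "\<dots> = (\<Prod>i\<in>{0..<N}. if i \<in> R then c else 1)"
      by (rule prod.cong) (auto simp: E_def dest: p)
    also have "\<dots> = c ^ card R"
      using R by (simp add: prod.If_cases Int_absorb1 lessThan_atLeast0)
    finally show ?thesis .
  qed
  ultimately have "det M = c ^ card R * det M'" using det_mult[OF E M'] by simp
  thus ?thesis by simp
qed

lemma linear_factor_pow_dvd_char_poly_of_paired_rows:
  fixes A :: "'a::comm_ring_1 mat"
  assumes A: "A \<in> carrier_mat N N" and R: "R \<subseteq> {..<N}"
    and p: "\<And>i. i \<in> R \<Longrightarrow> p i < i \<and> p i \<notin> R"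
    and pair: "\<And>i. i \<in> R \<Longrightarrow>
      A $$ (i, i) = 0 \<and> A $$ (p i, p i) = 0 \<and> A $$ (i, p i) = w \<and> A $$ (p i, i) = w"
    and rows: "\<And>i j. i \<in> R \<Longrightarrow> j < N \<Longrightarrow> j \<noteq> i \<Longrightarrow> j \<noteq> p i \<Longrightarrow> A $$ (i, j) = A $$ (p i, j)"
  shows "[:w, 1:] ^ card R dvd char_poly A"
  unfolding char_poly_def
proof (rule pow_dvd_det_of_paired_rows[OF char_poly_matrix_closed[OF A] R p])
  fix i j assume i: "i \<in> R" and j: "j < N"
  have "i < N" and "p i < N" and "p i \<noteq> i" using i R p[OF i] by auto
  then show "char_poly_matrix A $$ (i, j) = char_poly_matrix A $$ (p i, j) +
      [:w, 1:] * ((if j = i then 1 else 0) - (if j = p i then 1 else 0))"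
    using A j pair[OF i] rows[OF i j] by (auto simp: char_poly_matrix_def algebra_simps)
qed auto

lemma eigenvalue_order_ge_of_pow_dvd_char_poly:
  fixes A :: "'a::field mat"
  assumes A: "A \<in> carrier_mat N N" and dvd: "[:c, 1:] ^ k dvd char_poly A" and k: "k \<ge> 1"
  shows "eigenvalue A (- c) \<and> Polynomial.order (- c) (char_poly A) \<ge> k"
proof -
  have "char_poly A \<noteq> 0" using degree_monic_char_poly[OF A] by auto
  hence order: "Polynomial.order (- c) (char_poly A) \<ge> k" using dvd order_divides[of "- c" k] by simp
  hence "poly (char_poly A) (- c) = 0" using k by (simp add: order_root)
  thus ?thesis using order eigenvalue_root_char_poly[OF A] by simp
qed

definition twin_clique :: "'a set \<Rightarrow> ('a \<Rightarrow> 'a \<Rightarrow> bool) \<Rightarrow> 'a set \<Rightarrow> bool" where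
  "twin_clique V E C \<longleftrightarrow> C \<subseteq> V \<and> (\<forall>x\<in>C. \<not> E x x) \<and> (\<forall>x\<in>C. \<forall>x'\<in>C. x \<noteq> x' \<longrightarrow> E x x') \<and>
     (\<forall>x\<in>C. \<forall>x'\<in>C. \<forall>y. y \<noteq> x \<longrightarrow> y \<noteq> x' \<longrightarrow> E x y = E x' y)"

lemma twin_clique_subset: "twin_clique V E C \<Longrightarrow> C \<subseteq> V"
  by (simp add: twin_clique_def)

lemma sombor_matrix_twin_rows:
  assumes u: "inj_on u {0..<N}" and C: "twin_clique V E C"
    and i: "i < N" "u i \<in> C" and i': "i' < N" "u i' \<in> C" "i \<noteq> i'"
    and deg: "graph_deg V E (u i) = d" "graph_deg V E (u i') = d"
  defines "S \<equiv> sombor_matrix V E N u"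
  shows "S $$ (i, i) = 0" and "S $$ (i, i') = real d * sqrt 2"
    and "\<And>j. j < N \<Longrightarrow> j \<noteq> i \<Longrightarrow> j \<noteq> i' \<Longrightarrow> S $$ (i, j) = S $$ (i', j)"
proof -
  have S: "S $$ (k, j) = (if E (u k) (u j)
      then sqrt (real (graph_deg V E (u k)) ^ 2 + real (graph_deg V E (u j)) ^ 2) else 0)"
    if "k < N" "j < N" for k j using that unfolding S_def sombor_matrix_def by simp
  have "u i \<noteq> u i'" using inj_onD[OF u] i i' by auto
  hence "E (u i) (u i')" using C i i' unfolding twin_clique_def by blast
  moreover have "sqrt (real d ^ 2 + real d ^ 2) = real d * sqrt 2"
    by (simp add: real_sqrt_mult flip: mult_2_right)
  ultimately show "S $$ (i, i') = real d * sqrt 2" using S i i' deg by simp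
  show "S $$ (i, i) = 0" using S i C unfolding twin_clique_def by simp
  fix j assume j: "j < N" "j \<noteq> i" "j \<noteq> i'"
  hence "u j \<noteq> u i" "u j \<noteq> u i'" using inj_onD[OF u] i i' by auto
  hence "E (u i) (u j) = E (u i') (u j)" using C i i' unfolding twin_clique_def by blast
  thus "S $$ (i, j) = S $$ (i', j)" using S i i' j deg by simp
qed

lemma sombor_char_poly_twin_cliques_dvd:
  assumes u: "bij_betw u {0..<N} V"
    and twin: "\<And>C. C \<in> \<C> \<Longrightarrow> twin_clique V E C" and disj: "disjoint \<C>"
    and deg: "\<And>x. x \<in> \<Union>\<C> \<Longrightarrow> graph_deg V E x = d"
  shows "[:real d * sqrt 2, 1:] ^ (\<Sum>C\<in>\<C>. card C - 1) dvd char_poly (sombor_matrix V E N u)"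
proof -
  define idx where "idx C = {i \<in> {0..<N}. u i \<in> C}" for C
  define rep where "rep C = Min (idx C)" for C
  define R where "R = (\<Union>C\<in>\<C>. idx C - {rep C})"
  define p where "p i = rep (THE C. C \<in> \<C> \<and> u i \<in> C)" for i
  have inj: "inj_on u {0..<N}" using u by (rule bij_betw_imp_inj_on)
  have "finite V" using u bij_betw_finite by blast
  moreover have "\<C> \<subseteq> Pow V" using twin twin_clique_subset by blast
  ultimately have fin: "finite \<C>" by (meson finite_Pow_iff finite_subset)
  have card_idx: "card (idx C) = card C" if "C \<in> \<C>" for C
  proof (rule bij_betw_same_card, rule bij_betw_subset[OF u])
    show "u ` idx C = C"
      using u twin_clique_subset[OF twin[OF that]] by (auto simp: idx_def bij_betw_def)
  qed (auto simp: idx_def)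
  have rep: "rep C \<in> idx C" "rep C \<le> i" if "i \<in> idx C" for C i
    using that Min_in[of "idx C"] Min_le[of "idx C"] by (auto simp: rep_def idx_def)
  have p: "p i = rep C" if "C \<in> \<C>" "i \<in> idx C" for C i
  proof -
    have "(THE C'. C' \<in> \<C> \<and> u i \<in> C') = C"
      using that disjointD[OF disj] by (intro the_equality) (auto simp: idx_def)
    thus ?thesis by (simp add: p_def)
  qed
  have R: "R \<subseteq> {..<N}" by (auto simp: R_def idx_def)
  have pR: "p i < i \<and> p i \<notin> R" if "i \<in> R" for i
  proof -
    obtain C where C: "C \<in> \<C>" "i \<in> idx C" "i \<noteq> rep C" using \<open>i \<in> R\<close> by (auto simp: R_def)
    have "rep C \<notin> idx C' - {rep C'}" if "C' \<in> \<C>" for C'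
      using rep(1)[OF C(2)] that C(1) disjointD[OF disj, of C C'] by (auto simp: idx_def)
    moreover have "p i = rep C" using p C by simp
    moreover have "rep C < i" using rep[OF C(2)] C(3) by simp
    ultimately show ?thesis by (auto simp: R_def)
  qed
  have "card R = (\<Sum>C\<in>\<C>. card (idx C - {rep C}))"
    unfolding R_def using fin disjointD[OF disj] by (intro card_UN_disjoint) (auto simp: idx_def)
  also have "\<dots> = (\<Sum>C\<in>\<C>. card C - 1)"
  proof (rule sum.cong)
    fix C assume "C \<in> \<C>"
    have "finite (idx C)" by (simp add: idx_def)
    then show "card (idx C - {rep C}) = card C - 1"
      using rep(1) card_idx[OF \<open>C \<in> \<C>\<close>] by (cases "idx C = {}") auto
  qed simp
  finally have card_R: "card R = (\<Sum>C\<in>\<C>. card C - 1)" .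
  have S: "sombor_matrix V E N u \<in> carrier_mat N N" by (simp add: sombor_matrix_def)
  show ?thesis
    unfolding card_R[symmetric]
  proof (rule linear_factor_pow_dvd_char_poly_of_paired_rows[OF S R pR])
    fix i j assume "i \<in> R"
    then obtain C where C: "C \<in> \<C>" "i \<in> idx C" "i \<noteq> rep C" by (auto simp: R_def)
    have pi: "p i = rep C" using p C by simp
    have i: "i < N" "u i \<in> C" and r: "rep C < N" "u (rep C) \<in> C"
      using C rep(1)[OF C(2)] by (auto simp: idx_def)
    have d: "graph_deg V E (u i) = d" "graph_deg V E (u (rep C)) = d" using C(1) i(2) r(2) deg by auto
    note rows = sombor_matrix_twin_rows[OF inj twin[OF C(1)] i r C(3) d]
      and rows' = sombor_matrix_twin_rows[OF inj twin[OF C(1)] r i C(3)[symmetric] d(2,1)]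
    show "sombor_matrix V E N u $$ (i, i) = 0 \<and> sombor_matrix V E N u $$ (p i, p i) = 0 \<and>
        sombor_matrix V E N u $$ (i, p i) = real d * sqrt 2 \<and> sombor_matrix V E N u $$ (p i, i) = real d * sqrt 2"
      unfolding pi using rows(1,2) rows'(1,2) by simp
    show "j < N \<Longrightarrow> j \<noteq> i \<Longrightarrow> j \<noteq> p i \<Longrightarrow> sombor_matrix V E N u $$ (i, j) = sombor_matrix V E N u $$ (p i, j)"
      unfolding pi by (rule rows(3))
  qed
qed

lemma mod_less_twice: "(a::nat) < 2 * m \<Longrightarrow> a mod m = (if a < m then a else a - m)"
  by (cases "a < m") (simp_all add: le_mod_geq)

lemma mod_less_thrice:
  "(a::nat) < 3 * m \<Longrightarrow> a mod m = (if a < m then a else if a < 2 * m then a - m else a - 2 * m)"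
  by (cases "a < m"; cases "a < 2 * m") (simp_all add: le_mod_geq)

lemma dvd_less_twice_iff: "(a::nat) < 2 * m \<Longrightarrow> m dvd a \<longleftrightarrow> a = 0 \<or> a = m"
proof
  assume "a < 2 * m" "m dvd a"
  then obtain q where "a = m * q" and "m * q < m * 2" by (auto elim!: dvdE)
  moreover from this(2) have "q < 2" by (simp only: mult_less_cancel1)
  ultimately show "a = 0 \<or> a = m" by (auto simp: less_Suc_eq numeral_2_eq_2)
qed auto

lemma dvd_less_thrice_iff: "(a::nat) < 3 * m \<Longrightarrow> m dvd a \<longleftrightarrow> a = 0 \<or> a = m \<or> a = 2 * m"
proof
  assume "a < 3 * m" "m dvd a"
  then obtain q where "a = m * q" and "m * q < m * 3" by (auto elim!: dvdE)
  moreover from this(2) have "q < 3" by (simp only: mult_less_cancel1)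
  ultimately show "a = 0 \<or> a = m \<or> a = 2 * m" by (auto simp: less_Suc_eq numeral_3_eq_3)
qed auto

lemma Q_carrier_iff: "x \<in> carrier (Q n) \<longleftrightarrow> fst x < 2 * n \<and> snd x < 2"
  by (cases x) (auto simp: Q_def)

lemma Q_carrier_cases:
  assumes "x \<in> carrier (Q n)"
  obtains m where "m < 2 * n" "x = (m, 0)" | m where "m < 2 * n" "x = (m, 1)"
  using assms by (cases x) (auto simp: Q_carrier_iff less_2_cases_iff)

lemma Q_mult: "x \<otimes>\<^bsub>Q n\<^esub> y = quat_mult n x y"
  by (simp add: Q_def)

lemma Q_one: "\<one>\<^bsub>Q n\<^esub> = (0, 0)"
  by (simp add: Q_def)

lemma Q_inv_a:
  assumes "k < 2 * n" shows "inv\<^bsub>Q n\<^esub> (k, 0) = ((2 * n - k) mod (2 * n), 0)"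
  unfolding m_inv_def
proof (rule the_equality)
  show "((2 * n - k) mod (2 * n), 0) \<in> carrier (Q n) \<and>
      (k, 0) \<otimes>\<^bsub>Q n\<^esub> ((2 * n - k) mod (2 * n), 0) = \<one>\<^bsub>Q n\<^esub> \<and>
      ((2 * n - k) mod (2 * n), 0) \<otimes>\<^bsub>Q n\<^esub> (k, 0) = \<one>\<^bsub>Q n\<^esub>"
    using assms by (auto simp: Q_carrier_iff Q_mult Q_one quat_mult_def mod_less_twice)
  fix y assume "y \<in> carrier (Q n) \<and> (k, 0) \<otimes>\<^bsub>Q n\<^esub> y = \<one>\<^bsub>Q n\<^esub> \<and> y \<otimes>\<^bsub>Q n\<^esub> (k, 0) = \<one>\<^bsub>Q n\<^esub>"
  then show "y = ((2 * n - k) mod (2 * n), 0)"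
    using assms by (cases y) (auto simp: Q_carrier_iff Q_mult Q_one quat_mult_def
        mod_less_twice dvd_less_twice_iff split: if_splits)
qed

lemma Q_inv_b:
  assumes "k < 2 * n" shows "inv\<^bsub>Q n\<^esub> (k, 1) = ((k + n) mod (2 * n), 1)"
  unfolding m_inv_def
proof (rule the_equality)
  show "((k + n) mod (2 * n), 1) \<in> carrier (Q n) \<and>
      (k, 1) \<otimes>\<^bsub>Q n\<^esub> ((k + n) mod (2 * n), 1) = \<one>\<^bsub>Q n\<^esub> \<and>
      ((k + n) mod (2 * n), 1) \<otimes>\<^bsub>Q n\<^esub> (k, 1) = \<one>\<^bsub>Q n\<^esub>"
    using assms by (auto simp: Q_carrier_iff Q_mult Q_one quat_mult_def mod_less_twice mod_less_thrice)
  fix y assume "y \<in> carrier (Q n) \<and> (k, 1) \<otimes>\<^bsub>Q n\<^esub> y = \<one>\<^bsub>Q n\<^esub> \<and> y \<otimes>\<^bsub>Q n\<^esub> (k, 1) = \<one>\<^bsub>Q n\<^esub>"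
  then show "y = ((k + n) mod (2 * n), 1)"
    using assms by (cases y) (auto simp: Q_carrier_iff Q_mult Q_one quat_mult_def
        mod_less_twice mod_less_thrice dvd_less_twice_iff dvd_less_thrice_iff split: if_splits)
qed

lemma Q_conj_a_b:
  assumes "k < 2 * n" "m < 2 * n"
  shows "(k, 0) \<otimes>\<^bsub>Q n\<^esub> (m, 1) \<otimes>\<^bsub>Q n\<^esub> inv\<^bsub>Q n\<^esub> (k, 0) = ((2 * k + m) mod (2 * n), 1)"
  using assms by (auto simp: Q_inv_a Q_mult quat_mult_def mod_less_twice mod_less_thrice)

lemma Q_conj_b_b:
  assumes "k < 2 * n" "m < 2 * n"
  shows "(k, 1) \<otimes>\<^bsub>Q n\<^esub> (m, 1) \<otimes>\<^bsub>Q n\<^esub> inv\<^bsub>Q n\<^esub> (k, 1) = ((2 * k + 2 * n - m) mod (2 * n), 1)"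
proof -
  have "(k, 1) \<otimes>\<^bsub>Q n\<^esub> (m, 1) \<otimes>\<^bsub>Q n\<^esub> inv\<^bsub>Q n\<^esub> (k, 1) =
      (((k + 2 * n - m + n) mod (2 * n) + (k + n) mod (2 * n)) mod (2 * n), 1)"
    unfolding Q_inv_b[OF assms(1)] by (simp add: Q_mult quat_mult_def)
  also have "\<dots> = ((k + 2 * n - m + n + (k + n)) mod (2 * n), 1)"
    by (simp add: mod_add_eq)
  also have "k + 2 * n - m + n + (k + n) = (2 * k + 2 * n - m) + 2 * n"
    using assms by simp
  finally show ?thesis by simp
qed

lemma Q_conj_a_a:
  assumes "k < 2 * n" "m < 2 * n"
  shows "(k, 0) \<otimes>\<^bsub>Q n\<^esub> (m, 0) \<otimes>\<^bsub>Q n\<^esub> inv\<^bsub>Q n\<^esub> (k, 0) = (m, 0)"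
  using assms by (auto simp: Q_inv_a Q_mult quat_mult_def mod_less_twice mod_less_thrice)

lemma Q_conj_b_a:
  assumes "k < 2 * n" "m < 2 * n"
  shows "(k, 1) \<otimes>\<^bsub>Q n\<^esub> (m, 0) \<otimes>\<^bsub>Q n\<^esub> inv\<^bsub>Q n\<^esub> (k, 1) = ((2 * n - m) mod (2 * n), 0)"
  unfolding Q_inv_b[OF assms(1)] using assms
  by (auto simp: Q_mult quat_mult_def mod_less_twice mod_less_thrice)

lemma Q_conjugate_refl:
  assumes "g \<in> carrier (Q n)" shows "conjugate (Q n) g g"
proof -
  have "(0, 0) \<in> carrier (Q n)" using assms by (simp add: Q_carrier_iff)
  moreover have "(0, 0) \<otimes>\<^bsub>Q n\<^esub> g \<otimes>\<^bsub>Q n\<^esub> inv\<^bsub>Q n\<^esub> (0, 0) = g"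
    using assms
  proof (cases rule: Q_carrier_cases)
    case (1 m)
    then show ?thesis using Q_conj_a_a[of 0 n m] by simp
  next
    case (2 m)
    then show ?thesis using Q_conj_a_b[of 0 n m] by simp
  qed
  ultimately show ?thesis using assms unfolding conjugate_def by metis
qed

lemma Q_conjugate_b_iff:
  assumes m: "m < 2 * n"
  shows "conjugate (Q n) (m, 1) h \<longleftrightarrow> h \<in> carrier (Q n) \<and> snd h = 1 \<and> even (m + fst h)"
proof
  assume "conjugate (Q n) (m, 1) h"
  then obtain x where h: "h \<in> carrier (Q n)" and x: "x \<in> carrier (Q n)"
    and conj: "h = x \<otimes>\<^bsub>Q n\<^esub> (m, 1) \<otimes>\<^bsub>Q n\<^esub> inv\<^bsub>Q n\<^esub> x"
    by (auto simp: conjugate_def)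
  have even_mod: "even (a mod (2 * n)) \<longleftrightarrow> even a" for a :: nat
    by (simp add: dvd_mod_iff)
  from x show "h \<in> carrier (Q n) \<and> snd h = 1 \<and> even (m + fst h)"
  proof (cases rule: Q_carrier_cases)
    case (1 k)
    then show ?thesis using h conj Q_conj_a_b[OF 1(1) m] by (simp add: even_add even_mod)
  next
    case (2 k)
    moreover have "even (2 * k + 2 * n - m) = even m" using m by presburger
    ultimately show ?thesis using h conj Q_conj_b_b[OF 2(1) m] by (simp add: even_add even_mod)
  qed
next
  assume h: "h \<in> carrier (Q n) \<and> snd h = 1 \<and> even (m + fst h)"
  define k where "k = (fst h + 2 * n - m) div 2"
  have "k < 2 * n" "2 * k + m = fst h + 2 * n"
    using h m unfolding k_def by (auto simp: Q_carrier_iff)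
  moreover have "h = (fst h, 1)" using h by (cases h) simp
  ultimately have "h = (k, 0) \<otimes>\<^bsub>Q n\<^esub> (m, 1) \<otimes>\<^bsub>Q n\<^esub> inv\<^bsub>Q n\<^esub> (k, 0)" "(k, 0) \<in> carrier (Q n)"
    using Q_conj_a_b[of k n m] h m by (auto simp: Q_carrier_iff)
  then show "conjugate (Q n) (m, 1) h" using h m by (auto simp: conjugate_def Q_carrier_iff)
qed

lemma Q_conjugate_aD:
  assumes "conjugate (Q n) (m, 0) h" shows "h = (m, 0) \<or> h = ((2 * n - m) mod (2 * n), 0)"
proof -
  from assms obtain x where m: "m < 2 * n" and x: "x \<in> carrier (Q n)"
    and conj: "h = x \<otimes>\<^bsub>Q n\<^esub> (m, 0) \<otimes>\<^bsub>Q n\<^esub> inv\<^bsub>Q n\<^esub> x"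
    by (auto simp: conjugate_def Q_carrier_iff)
  from x show ?thesis
  proof (cases rule: Q_carrier_cases)
    case (1 k)
    then show ?thesis using conj Q_conj_a_a[OF 1(1) m] by simp
  next
    case (2 k)
    then show ?thesis using conj Q_conj_b_a[OF 2(1) m] by simp
  qed
qed

text \<open>The subgroup generated by \<open>a\<^sup>k b\<close>, which has order 4 because \<open>(a\<^sup>k b)\<^sup>2 = a\<^sup>n\<close>.\<close>

definition Q_b_cyclic :: "nat \<Rightarrow> nat \<Rightarrow> (nat \<times> nat) set" where
  "Q_b_cyclic n k = {(0, 0), (n, 0), (k mod n, 1), (k mod n + n, 1)}"

lemma generate_Q_a_subset:
  assumes "k < 2 * n" shows "generate (Q n) {(k, 0)} \<subseteq> {z. snd z = 0}"
proof
  fix z assume "z \<in> generate (Q n) {(k, 0)}"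
  then show "z \<in> {z. snd z = 0}"
  proof (induction rule: generate.induct)
    case one
    then show ?case by (simp add: Q_one)
  next
    case (incl h)
    then show ?case by auto
  next
    case (inv h)
    then show ?case using Q_inv_a[OF assms] by auto
  next
    case (eng h1 h2)
    then show ?case by (auto simp: Q_mult quat_mult_def split: prod.splits)
  qed
qed

lemma generate_Q_b_subset:
  assumes "k < 2 * n" shows "generate (Q n) {(k, 1)} \<subseteq> Q_b_cyclic n k"
proof
  have closed: "quat_mult n x y \<in> Q_b_cyclic n k" if "x \<in> Q_b_cyclic n k" "y \<in> Q_b_cyclic n k" for x y
    using that assms by (auto simp: Q_b_cyclic_def quat_mult_def mod_less_twice mod_less_thrice)
  fix z assume "z \<in> generate (Q n) {(k, 1)}"
  then show "z \<in> Q_b_cyclic n k"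
  proof (induction rule: generate.induct)
    case one
    then show ?case by (simp add: Q_one Q_b_cyclic_def)
  next
    case (incl h)
    then show ?case using assms by (auto simp: Q_b_cyclic_def mod_less_twice)
  next
    case (inv h)
    then show ?case using Q_inv_b[OF assms] assms by (auto simp: Q_b_cyclic_def mod_less_twice)
  next
    case (eng h1 h2)
    then show ?case using closed by (simp add: Q_mult)
  qed
qed

lemma power_adj_Q_b:
  assumes j: "j < 2 * n" and adj: "power_adj (Q n) (j, 1) y"
  shows "y \<in> Q_b_cyclic n j"
proof -
  have "y \<in> carrier (Q n)" using adj by (simp add: power_adj_def)
  then show ?thesis
  proof (cases rule: Q_carrier_cases)
    case (1 k)
    then have "(j, 1) \<notin> generate (Q n) {y}" using generate_Q_a_subset[of k n] by auto
    then show ?thesis using adj generate_Q_b_subset[OF j] by (auto simp: power_adj_def)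
  next
    case (2 k)
    have "(j, 1) \<in> generate (Q n) {y} \<Longrightarrow> j mod n = k mod n"
      using generate_Q_b_subset[OF 2(1)] 2(2) by (auto simp: Q_b_cyclic_def)
    then show ?thesis
      using adj generate_Q_b_subset[OF j] generate_Q_b_subset[OF 2(1)] 2
      by (auto simp: power_adj_def Q_b_cyclic_def mod_less_twice)
  qed
qed

lemma csp_adj_Q_bD:
  assumes i: "i < 2 * n" and adj: "csp_adj (Q n) (i, 1) y"
  shows "y \<in> {(0, 0), (n, 0)} \<or> snd y = 1 \<and> (odd n \<or> even (i + fst y))"
proof (cases "conjugate (Q n) (i, 1) y")
  case True
  then show ?thesis using Q_conjugate_b_iff[OF i] by simp
next
  case False
  then obtain g h where "conjugate (Q n) (i, 1) g" and yh: "conjugate (Q n) y h"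
    and gh: "power_adj (Q n) g h"
    using adj by (auto simp: csp_adj_def)
  then obtain j where g: "g = (j, 1)" "j < 2 * n" "even (i + j)"
    using Q_conjugate_b_iff[OF i] by (cases g) (auto simp: Q_carrier_iff)
  have h: "h \<in> Q_b_cyclic n j" using power_adj_Q_b[OF g(2)] gh g(1) by simp
  have "y \<in> carrier (Q n)" using adj by (simp add: csp_adj_def)
  then show ?thesis
  proof (cases rule: Q_carrier_cases)
    case (1 a)
    then have "h = (a, 0) \<or> h = ((2 * n - a) mod (2 * n), 0)" using Q_conjugate_aD yh by simp
    then show ?thesis using h 1 by (auto simp: Q_b_cyclic_def mod_less_twice split: if_splits)
  next
    case (2 a)
    then have "snd h = 1" "even (a + fst h)" using Q_conjugate_b_iff yh by auto
    then have "fst h = j mod n \<or> fst h = j mod n + n" "even (a + fst h)"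
      using h by (auto simp: Q_b_cyclic_def)
    moreover have "even n \<Longrightarrow> even (j mod n) = even j" by (simp add: dvd_mod_iff)
    ultimately have "odd n \<or> even (i + a)" using g(3) by auto
    then show ?thesis using 2 by simp
  qed
qed

lemma csp_adj_Q_b_iff:
  assumes i: "i < 2 * n"
  shows "csp_adj (Q n) (i, 1) y \<longleftrightarrow> y \<in> carrier (Q n) \<and> y \<noteq> (i, 1) \<and>
    (y \<in> {(0, 0), (n, 0)} \<or> snd y = 1 \<and> (odd n \<or> even (i + fst y)))"
proof
  assume "csp_adj (Q n) (i, 1) y"
  then show "y \<in> carrier (Q n) \<and> y \<noteq> (i, 1) \<and>
      (y \<in> {(0, 0), (n, 0)} \<or> snd y = 1 \<and> (odd n \<or> even (i + fst y)))"
    using csp_adj_Q_bD[OF i] by (auto simp: csp_adj_def)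
next
  assume y: "y \<in> carrier (Q n) \<and> y \<noteq> (i, 1) \<and>
      (y \<in> {(0, 0), (n, 0)} \<or> snd y = 1 \<and> (odd n \<or> even (i + fst y)))"
  have x: "(i, 1) \<in> carrier (Q n)" using i by (simp add: Q_carrier_iff)
  have via_power: "csp_adj (Q n) (i, 1) y" if "conjugate (Q n) y h" "h \<in> generate (Q n) {(i, 1)}"
    "h \<noteq> (i, 1)" "h \<in> carrier (Q n)" for h
  proof -
    have "power_adj (Q n) (i, 1) h" using that x by (auto simp: power_adj_def)
    then show ?thesis using that(1) y x Q_conjugate_refl[OF x] unfolding csp_adj_def by blast
  qed
  have y_refl: "conjugate (Q n) y y" using y Q_conjugate_refl by blast
  consider "y = (0, 0)" | "y = (n, 0)" | "snd y = 1" "even (i + fst y)" | "snd y = 1" "odd n" "odd (i + fst y)"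
    using y by auto
  then show "csp_adj (Q n) (i, 1) y"
  proof cases
    case 1
    then show ?thesis using via_power[OF y_refl] generate.one[of "Q n" "{(i, 1)}"] y by (simp add: Q_one)
  next
    case 2
    have "(i, 1) \<otimes>\<^bsub>Q n\<^esub> (i, 1) \<in> generate (Q n) {(i, 1)}"
      by (intro generate.eng generate.incl) auto
    moreover have "(i, 1) \<otimes>\<^bsub>Q n\<^esub> (i, 1) = (n, 0)"
      using i by (simp add: Q_mult quat_mult_def mod_less_thrice)
    ultimately show ?thesis using via_power[OF y_refl] 2 y by simp
  next
    case 3
    then have "conjugate (Q n) (i, 1) y" using Q_conjugate_b_iff[OF i] y by simp
    then show ?thesis using y x by (auto simp: csp_adj_def)
  next
    case 4
    \<comment> \<open>for odd \<open>n\<close> the inverse \<open>a\<^sup>i\<^sup>+\<^sup>n b\<close> of \<open>a\<^sup>i b\<close> has the other parity\<close>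
    define h where "h = ((i + n) mod (2 * n), 1::nat)"
    have "h \<in> generate (Q n) {(i, 1)}"
      using generate.inv[of "(i, 1)" "{(i, 1)}" "Q n"] Q_inv_b[OF i] by (simp add: h_def)
    moreover have "h \<noteq> (i, 1)" "h \<in> carrier (Q n)" using i 4 by (auto simp: h_def Q_carrier_iff mod_less_twice)
    moreover have "conjugate (Q n) y h"
      using 4 y i Q_conjugate_b_iff[of "fst y" n h] by (cases y) (auto simp: h_def Q_carrier_iff even_add dvd_mod_iff)
    ultimately show ?thesis using via_power by blast
  qed
qed

definition Q_b_clique :: "nat \<Rightarrow> nat \<Rightarrow> (nat \<times> nat) set" where
  "Q_b_clique n i = {y \<in> carrier (Q n). snd y = 1 \<and> (odd n \<or> even (i + fst y))}"

lemma csp_adj_Q_b_clique_iff: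
  assumes "x \<in> Q_b_clique n i"
  shows "csp_adj (Q n) x y \<longleftrightarrow> y \<in> carrier (Q n) \<and> y \<noteq> x \<and> (y \<in> Q_b_clique n i \<or> y \<in> {(0, 0), (n, 0)})"
proof -
  obtain i' where x: "x = (i', 1)" "i' < 2 * n" "odd n \<or> even (i + i')"
    using assms by (cases x) (auto simp: Q_b_clique_def Q_carrier_iff)
  have "(odd n \<or> even (i' + fst y)) \<longleftrightarrow> (odd n \<or> even (i + fst y))"
    using x(3) by (auto simp: even_add)
  then show ?thesis unfolding x(1) csp_adj_Q_b_iff[OF x(2)] Q_b_clique_def by blast
qed

lemma twin_clique_Q_b_clique: "twin_clique (carrier (Q n)) (csp_adj (Q n)) (Q_b_clique n i)"
proof -
  have "Q_b_clique n i \<subseteq> carrier (Q n)" by (auto simp: Q_b_clique_def)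
  moreover have "\<forall>x\<in>Q_b_clique n i. \<not> csp_adj (Q n) x x" by (simp add: csp_adj_def)
  moreover have "\<forall>x\<in>Q_b_clique n i. \<forall>x'\<in>Q_b_clique n i. x \<noteq> x' \<longrightarrow> csp_adj (Q n) x x'"
    using calculation(1) by (auto simp: csp_adj_Q_b_clique_iff)
  moreover have "\<forall>x\<in>Q_b_clique n i. \<forall>x'\<in>Q_b_clique n i. \<forall>y. y \<noteq> x \<longrightarrow> y \<noteq> x' \<longrightarrow>
      csp_adj (Q n) x y = csp_adj (Q n) x' y"
    by (simp add: csp_adj_Q_b_clique_iff)
  ultimately show ?thesis unfolding twin_clique_def by blast
qed

lemma graph_deg_Q_b_clique:
  assumes x: "x \<in> Q_b_clique n i"
  shows "graph_deg (carrier (Q n)) (csp_adj (Q n)) x = card (Q_b_clique n i) + 1"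
proof -
  have n: "n > 0" and "snd x = 1" using x by (auto simp: Q_b_clique_def Q_carrier_iff)
  have fin: "finite (Q_b_clique n i)"
    by (rule finite_subset[of _ "{0..<2 * n} \<times> {0..<2}"]) (auto simp: Q_b_clique_def Q_carrier_iff)
  have "{w \<in> carrier (Q n). csp_adj (Q n) x w} = (Q_b_clique n i - {x}) \<union> {(0, 0), (n, 0)}"
    using n \<open>snd x = 1\<close> by (auto simp: csp_adj_Q_b_clique_iff[OF x] Q_b_clique_def Q_carrier_iff)
  moreover have "(Q_b_clique n i - {x}) \<inter> {(0, 0), (n, 0)} = {}" by (auto simp: Q_b_clique_def)
  moreover have "card (Q_b_clique n i) > 0" using fin x card_gt_0_iff by blast
  ultimately show ?thesis using fin x n by (simp add: graph_deg_def card_Un_disjoint)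
qed

lemma card_Q_b_clique:
  assumes "n > 0" shows "card (Q_b_clique n i) = (if odd n then 2 * n else n)"
proof -
  define idx where "idx = {m \<in> {0..<2 * n}. odd n \<or> even (i + m)}"
  have "Q_b_clique n i = (\<lambda>m. (m, 1)) ` idx"
    by (auto simp: Q_b_clique_def idx_def Q_carrier_iff)
  then have card_idx: "card (Q_b_clique n i) = card idx" by (simp add: card_image inj_on_def)
  have idx_even: "idx = (\<lambda>t. 2 * t + i mod 2) ` {0..<n}" if "even n"
  proof
    show "idx \<subseteq> (\<lambda>t. 2 * t + i mod 2) ` {0..<n}"
    proof
      fix m assume "m \<in> idx"
      then have "m < 2 * n" "even (i + m)" using that by (auto simp: idx_def)
      then have "m = 2 * (m div 2) + i mod 2" "m div 2 < n" by presburger+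
      then show "m \<in> (\<lambda>t. 2 * t + i mod 2) ` {0..<n}" by (metis atLeastLessThan_iff image_eqI zero_le)
    qed
    show "(\<lambda>t. 2 * t + i mod 2) ` {0..<n} \<subseteq> idx"
    proof
      fix m assume "m \<in> (\<lambda>t. 2 * t + i mod 2) ` {0..<n}"
      then obtain t where "t < n" "m = 2 * t + i mod 2" by auto
      then show "m \<in> idx" unfolding idx_def by auto
    qed
  qed
  show ?thesis
  proof (cases "even n")
    case True
    have "inj_on (\<lambda>t. 2 * t + i mod 2) {0..<n}" by (auto simp: inj_on_def)
    then show ?thesis using True card_idx idx_even by (simp add: card_image)
  next
    case False
    then have "idx = {0..<2 * n}" by (auto simp: idx_def)
    then show ?thesis using False card_idx by simp
  qed
qed

lemma sombor_char_poly_Q_even_dvd: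
  assumes n: "even n" "n > 0" and u: "bij_betw u {0..<4 * n} (carrier (Q n))"
  shows "[:real (n + 1) * sqrt 2, 1:] ^ (2 * n - 2) dvd
    char_poly (sombor_matrix (carrier (Q n)) (csp_adj (Q n)) (4 * n) u)"
proof -
  let ?\<C> = "{Q_b_clique n 0, Q_b_clique n 1}"
  have disj: "disjoint ?\<C>" using n by (auto simp: disjoint_def Q_b_clique_def)
  have deg: "graph_deg (carrier (Q n)) (csp_adj (Q n)) x = n + 1" if "x \<in> \<Union>?\<C>" for x
    using that n by (auto simp: graph_deg_Q_b_clique card_Q_b_clique)
  have "(0, 1) \<in> Q_b_clique n 0 - Q_b_clique n 1"
    using n by (simp add: Q_b_clique_def Q_carrier_iff)
  then have "Q_b_clique n 0 \<noteq> Q_b_clique n 1" by blast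
  then have "(\<Sum>C\<in>?\<C>. card C - 1) = 2 * n - 2" using n by (simp add: card_Q_b_clique)
  moreover have "[:real (n + 1) * sqrt 2, 1:] ^ (\<Sum>C\<in>?\<C>. card C - 1) dvd
      char_poly (sombor_matrix (carrier (Q n)) (csp_adj (Q n)) (4 * n) u)"
    by (rule sombor_char_poly_twin_cliques_dvd[OF u]) (use twin_clique_Q_b_clique disj deg in blast)+
  ultimately show ?thesis by simp
qed

lemma sombor_char_poly_Q_odd_dvd:
  assumes n: "odd n" and u: "bij_betw u {0..<4 * n} (carrier (Q n))"
  shows "[:real (2 * n + 1) * sqrt 2, 1:] ^ (2 * n - 1) dvd
    char_poly (sombor_matrix (carrier (Q n)) (csp_adj (Q n)) (4 * n) u)"
proof -
  have "n > 0" using n by presburger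
  then have deg: "graph_deg (carrier (Q n)) (csp_adj (Q n)) x = 2 * n + 1"
    if "x \<in> \<Union>{Q_b_clique n 0}" for x
    using that n by (auto simp: graph_deg_Q_b_clique card_Q_b_clique)
  have "(\<Sum>C\<in>{Q_b_clique n 0}. card C - 1) = 2 * n - 1"
    using n \<open>n > 0\<close> by (simp add: card_Q_b_clique)
  moreover have "[:real (2 * n + 1) * sqrt 2, 1:] ^ (\<Sum>C\<in>{Q_b_clique n 0}. card C - 1) dvd
      char_poly (sombor_matrix (carrier (Q n)) (csp_adj (Q n)) (4 * n) u)"
    by (rule sombor_char_poly_twin_cliques_dvd[OF u]) (use twin_clique_Q_b_clique deg in auto)
  ultimately show ?thesis by simp
qed

theorem theorem6p10:
  fixes n :: nat and u :: "nat \<Rightarrow> nat \<times> nat"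
  assumes "n \<ge> 2"
    and "bij_betw u {0..<4 * n} (carrier (Q n))"
  defines "S \<equiv> sombor_matrix (carrier (Q n)) (csp_adj (Q n)) (4 * n) u"
  shows "(even n \<longrightarrow>
            eigenvalue S (- (real n + 1) * sqrt 2) \<and>
            order (- (real n + 1) * sqrt 2) (char_poly S) \<ge> 2 * n - 2) \<and>
         (odd n \<longrightarrow>
            eigenvalue S (- (2 * real n + 1) * sqrt 2) \<and>
            order (- (2 * real n + 1) * sqrt 2) (char_poly S) \<ge> 2 * n - 1)"
proof (rule conjI; intro impI)
  have S: "S \<in> carrier_mat (4 * n) (4 * n)" by (simp add: S_def sombor_matrix_def)
  show "eigenvalue S (- (real n + 1) * sqrt 2) \<and>
      order (- (real n + 1) * sqrt 2) (char_poly S) \<ge> 2 * n - 2" if "even n"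
  proof -
    have "[:real (n + 1) * sqrt 2, 1:] ^ (2 * n - 2) dvd char_poly S"
      unfolding S_def using that assms by (intro sombor_char_poly_Q_even_dvd) simp_all
    from eigenvalue_order_ge_of_pow_dvd_char_poly[OF S this] show ?thesis
      using assms(1) by (simp add: algebra_simps)
  qed
  show "eigenvalue S (- (2 * real n + 1) * sqrt 2) \<and>
      order (- (2 * real n + 1) * sqrt 2) (char_poly S) \<ge> 2 * n - 1" if "odd n"
  proof -
    have "[:real (2 * n + 1) * sqrt 2, 1:] ^ (2 * n - 1) dvd char_poly S"
      unfolding S_def using that assms(2) by (rule sombor_char_poly_Q_odd_dvd)
    from eigenvalue_order_ge_of_pow_dvd_char_poly[OF S this] show ?thesis
      using assms(1) by (simp add: algebra_simps)
  qed
qed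

end
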